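(* Let $\mathbb{M}(\mathbb{B})=\{F_A:A\in\mathrm{Sp}(1,1)\}$ be the set of classical Möbius transformations of $\mathbb{B}$ and $\mathcal{M}(\mathbb{B})=\{\mathcal{F}_A:A\in\mathrm{Sp}(1,1)\}$ the set of regular Möbius transformations of $\mathbb{B}$. Then $\mathbb{M}(\mathbb{B})\cap\mathcal{M}(\mathbb{B})$ consists exactly of the transformations $F_{a,u}:\mathbb{B}\to\mathbb{B}$, \[ F_{a,u}(q)=(1-qa)^{-1}(q-a)u, \] where $a\in(-1,1)$ and $u\in\mathrm{Sp}(1)$.
   Context: $\mathbb{H}$ denotes the quaternions, $\mathbb{B}=\{q\in\mathbb{H}:|q|<1\}$, $\mathrm{Sp}(1)=\{u\in\mathbb{H}:|u|=1\}$. Let $I_{1,1}=\operatorname{diag}(1,-1)$ and $\mathrm{Sp}(1,1)=\{A\in M_2(\mathbb{H}):A^*I_{1,1}A=I_{1,1}\}$. For $A=\begin{pmatrix}a&c\\ b&d\end{pmatrix}\in\mathrm{Sp}(1,1)$, the classical Möbius transformation is $F_A(q)=(qc+d)^{-1}(qa+b)$. Slice regular functions on $\mathbb{B}$ are exactly the functions $f(q)=\sum_{n\ge0}q^na_n$ ($a_n\in\mathbb{H}$) with the series converging on $\mathbb{B}$. The $*$-product is $(\sum q^na_n)*(\sum q^nb_n)=\sum_n q^n\sum_{k=0}^n a_kb_{n-k}$; $f^c(q)=\sum q^n\overline{a_n}$, $f^s=f*f^c$, $f^{-*}=(f^s)^{-1}f^c$ (pointwise, off the zero set of $f^s$). For $a,b\in\mathbb{H}$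 let $\ell_{a,b}(q)=qa+b$. For $A=\begin{pmatrix}a&c\\ b&d\end{pmatrix}\in\mathrm{Sp}(1,1)$, the regular Möbius transformation is $\mathcal{F}_A=\ell_{c,d}^{-*}*\ell_{a,b}$, which maps $\mathbb{B}$ diffeomorphically onto $\mathbb{B}$. *)

theory Defs
  imports "HOL-Analysis.Analysis"
begin

datatype quat = Quat (Re: real) (Im1: real) (Im2: real) (Im3: real)

lemma quat_eq_iff: "x = y \<longleftrightarrow> Re x = Re y \<and> Im1 x = Im1 y \<and> Im2 x = Im2 y \<and> Im3 x = Im3 y"
  by (cases x; cases y) auto

lemma quat_eqI: "Re x = Re y \<Longrightarrow> Im1 x = Im1 y \<Longrightarrow> Im2 x = Im2 y \<Longrightarrow> Im3 x = Im3 y \<Longrightarrow> x = y"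
  by (simp add: quat_eq_iff)

instantiation quat :: ab_group_add
begin
definition "0 = Quat 0 0 0 0"
definition "x + y = Quat (Re x + Re y) (Im1 x + Im1 y) (Im2 x + Im2 y) (Im3 x + Im3 y)"
definition "- x = Quat (- Re x) (- Im1 x) (- Im2 x) (- Im3 x)"
definition "x - y = Quat (Re x - Re y) (Im1 x - Im1 y) (Im2 x - Im2 y) (Im3 x - Im3 y)"
instance by standard (auto simp: zero_quat_def plus_quat_def uminus_quat_def minus_quat_def quat_eq_iff)
end

lemma quat_add_simps [simp]:
  "Re 0 = 0" "Im1 0 = 0" "Im2 0 = 0" "Im3 0 = 0"
  "Re (x + y) = Re x + Re y" "Im1 (x + y) = Im1 x + Im1 y" "Im2 (x + y) = Im2 x + Im2 y" "Im3 (x + y) = Im3 x + Im3 y"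
  "Re (- x) = - Re x" "Im1 (- x) = - Im1 x" "Im2 (- x) = - Im2 x" "Im3 (- x) = - Im3 x"
  "Re (x - y) = Re x - Re y" "Im1 (x - y) = Im1 x - Im1 y" "Im2 (x - y) = Im2 x - Im2 y" "Im3 (x - y) = Im3 x - Im3 y"
  by (simp_all add: zero_quat_def plus_quat_def uminus_quat_def minus_quat_def)

instantiation quat :: real_vector
begin
definition "scaleR r x = Quat (r * Re x) (r * Im1 x) (r * Im2 x) (r * Im3 x)"
instance by standard (auto simp: scaleR_quat_def quat_eq_iff algebra_simps)
end

lemma quat_scaleR_simps [simp]:
  "Re (r *\<^sub>R x) = r * Re x" "Im1 (r *\<^sub>R x) = r * Im1 x"
  "Im2 (r *\<^sub>R x) = r * Im2 x" "Im3 (r *\<^sub>R x) = r * Im3 x"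
  by (simp_all add: scaleR_quat_def)

instantiation quat :: "{ring_1, inverse}"
begin
definition "1 = Quat 1 0 0 0"
definition "x * y = Quat
   (Re x * Re y - Im1 x * Im1 y - Im2 x * Im2 y - Im3 x * Im3 y)
   (Re x * Im1 y + Im1 x * Re y + Im2 x * Im3 y - Im3 x * Im2 y)
   (Re x * Im2 y - Im1 x * Im3 y + Im2 x * Re y + Im3 x * Im1 y)
   (Re x * Im3 y + Im1 x * Im2 y - Im2 x * Im1 y + Im3 x * Re y)"
definition "inverse x = (let n = (Re x)\<^sup>2 + (Im1 x)\<^sup>2 + (Im2 x)\<^sup>2 + (Im3 x)\<^sup>2 in
   Quat (Re x / n) (- Im1 x / n) (- Im2 x / n) (- Im3 x / n))"
definition "divide x y = x * inverse (y :: quat)"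
instance by standard (auto simp: one_quat_def times_quat_def quat_eq_iff algebra_simps)
end

lemma quat_mult_simps [simp]:
  "Re 1 = 1" "Im1 1 = 0" "Im2 1 = 0" "Im3 1 = 0"
  "Re (x * y) = Re x * Re y - Im1 x * Im1 y - Im2 x * Im2 y - Im3 x * Im3 y"
  "Im1 (x * y) = Re x * Im1 y + Im1 x * Re y + Im2 x * Im3 y - Im3 x * Im2 y"
  "Im2 (x * y) = Re x * Im2 y - Im1 x * Im3 y + Im2 x * Re y + Im3 x * Im1 y"
  "Im3 (x * y) = Re x * Im3 y + Im1 x * Im2 y - Im2 x * Im1 y + Im3 x * Re y"
  by (simp_all add: one_quat_def times_quat_def)

lemma quat_sumsq_pos: "x \<noteq> 0 \<Longrightarrow> (Re x)\<^sup>2 + (Im1 x)\<^sup>2 + (Im2 x)\<^sup>2 + (Im3 x)\<^sup>2 > 0"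
proof (cases x)
  case (Quat a b c d)
  assume "x \<noteq> 0"
  then have "a \<noteq> 0 \<or> b \<noteq> 0 \<or> c \<noteq> 0 \<or> d \<noteq> 0" using Quat by (auto simp: zero_quat_def)
  then show ?thesis using Quat
    by (smt (verit) quat.sel zero_le_power2 zero_less_power2)
qed

instance quat :: division_ring
proof
  fix x :: quat
  assume x: "x \<noteq> 0"
  define n where "n = (Re x)\<^sup>2 + (Im1 x)\<^sup>2 + (Im2 x)\<^sup>2 + (Im3 x)\<^sup>2"
  have n: "n \<noteq> 0" using quat_sumsq_pos[OF x] unfolding n_def by simp
  have e: "Re x * Re x + Im1 x * Im1 x + Im2 x * Im2 x + Im3 x * Im3 x = n"
    by (simp add: n_def power2_eq_square)
  show "inverse x * x = 1" "x * inverse x = 1"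
    using n e by (auto simp: quat_eq_iff inverse_quat_def Let_def n_def[symmetric] diff_divide_distrib[symmetric]
       add_divide_distrib[symmetric] algebra_simps power2_eq_square)
next
  show "inverse (0::quat) = 0" by (simp add: inverse_quat_def quat_eq_iff)
qed (simp add: divide_quat_def)

instantiation quat :: real_inner
begin
definition "inner x y = Re x * Re y + Im1 x * Im1 y + Im2 x * Im2 y + Im3 x * Im3 y"
definition "norm x = sqrt (inner x (x::quat))"
definition "sgn x = x /\<^sub>R norm (x::quat)"
definition "dist x y = norm (x - y :: quat)"
definition "(uniformity :: (quat \<times> quat) filter) = (INF e\<in>{0<..}. principal {(x, y). dist x y < e})"
definition "open (U :: quat set) \<longleftrightarrow> (\<forall>x\<in>U. eventually (\<lambda>(x', y). x' = x \<longrightarrow> y \<in> U) uniformity)"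
instance
proof
  fix x y z :: quat and r :: real
  show "inner x y = inner y x" by (simp add: inner_quat_def algebra_simps)
  show "inner (x + y) z = inner x z + inner y z" by (simp add: inner_quat_def algebra_simps)
  show "inner (r *\<^sub>R x) y = r * inner x y" by (simp add: inner_quat_def algebra_simps)
  show "0 \<le> inner x x" by (simp add: inner_quat_def)
  show "inner x x = 0 \<longleftrightarrow> x = 0"
  proof
    assume "inner x x = 0"
    then show "x = 0"
      using quat_sumsq_pos[of x] by (cases "x = 0") (auto simp: inner_quat_def power2_eq_square)
  qed (simp add: inner_quat_def)
qed (simp_all add: norm_quat_def sgn_quat_def dist_quat_def uniformity_quat_def open_quat_def)
end

lemma norm_quat_eq: "norm x = sqrt ((Re x)\<^sup>2 + (Im1 x)\<^sup>2 + (Im2 x)\<^sup>2 + (Im3 x)\<^sup>2)"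
  by (simp add: norm_quat_def inner_quat_def power2_eq_square)

instance quat :: real_normed_div_algebra
proof (standard)
  fix x y :: quat and a :: real
  show "norm (x * y) = norm x * norm y"
    by (simp add: norm_quat_eq real_sqrt_mult[symmetric]) (simp add: power2_eq_square algebra_simps)
  show "a *\<^sub>R x * y = a *\<^sub>R (x * y)" by (simp add: quat_eq_iff algebra_simps)
  show "x * a *\<^sub>R y = a *\<^sub>R (x * y)" by (simp add: quat_eq_iff algebra_simps)
qed

definition cnj :: "quat \<Rightarrow> quat" where
  "cnj x = Quat (Re x) (- Im1 x) (- Im2 x) (- Im3 x)"

abbreviation qball :: "quat set" where "qball \<equiv> ball 0 1"

text \<open>A quaternionic 2x2 matrix A = [[a, c], [b, d]] is encoded by its entries (a, b, c, d).
  A lies in Sp(1,1) iff A^* I_{1,1} A = I_{1,1}, where A^* = [[cnj a, cnj b], [cnj c, cnj d]]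
  and I_{1,1} A = [[a, c], [-b, -d]]; written out entrywise:\<close>
definition sp11 :: "quat \<Rightarrow> quat \<Rightarrow> quat \<Rightarrow> quat \<Rightarrow> bool" where
  "sp11 a b c d \<longleftrightarrow>
     cnj a * a + cnj b * (- b) = 1 \<and> cnj a * c + cnj b * (- d) = 0 \<and>
     cnj c * a + cnj d * (- b) = 0 \<and> cnj c * c + cnj d * (- d) = - 1"

definition mobius :: "quat \<Rightarrow> quat \<Rightarrow> quat \<Rightarrow> quat \<Rightarrow> quat \<Rightarrow> quat" where
  "mobius a b c d q = inverse (q * c + d) * (q * a + b)"

definition slice_regular :: "(quat \<Rightarrow> quat) \<Rightarrow> bool" where
  "slice_regular f \<longleftrightarrow> (\<exists>a. \<forall>q\<in>qball. (\<lambda>n. q ^ n * a n) sums f q)"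

definition scoeff :: "(quat \<Rightarrow> quat) \<Rightarrow> nat \<Rightarrow> quat" where
  "scoeff f = (SOME a. \<forall>q\<in>qball. (\<lambda>n. q ^ n * a n) sums f q)"

definition star :: "(quat \<Rightarrow> quat) \<Rightarrow> (quat \<Rightarrow> quat) \<Rightarrow> quat \<Rightarrow> quat" (infixl "\<star>" 70) where
  "f \<star> g = (\<lambda>q. \<Sum>n. q ^ n * (\<Sum>k\<le>n. scoeff f k * scoeff g (n - k)))"

definition rconj :: "(quat \<Rightarrow> quat) \<Rightarrow> quat \<Rightarrow> quat" where
  "rconj f = (\<lambda>q. \<Sum>n. q ^ n * cnj (scoeff f n))"

definition rsym :: "(quat \<Rightarrow> quat) \<Rightarrow> quat \<Rightarrow> quat" where
  "rsym f = f \<star> rconj f"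

definition rinv :: "(quat \<Rightarrow> quat) \<Rightarrow> quat \<Rightarrow> quat" where
  "rinv f = (\<lambda>q. inverse (rsym f q) * rconj f q)"

definition lin :: "quat \<Rightarrow> quat \<Rightarrow> quat \<Rightarrow> quat" where
  "lin a b = (\<lambda>q. q * a + b)"

definition reg_mobius :: "quat \<Rightarrow> quat \<Rightarrow> quat \<Rightarrow> quat \<Rightarrow> quat \<Rightarrow> quat" where
  "reg_mobius a b c d = rinv (lin c d) \<star> lin a b"

end

theory Submission
  imports Defs "HOL-Complex_Analysis.Cauchy_Integral_Formula"
begin

(*
  Sp(1,1) forces |d|^2 = |c|^2 + 1, so |c| < |d|.  Both the regular reciprocal of q c + d and the
  series sum_n q^n d^-1 (- c d^-1)^n solve the Sylvester equation X d + q X c = 1, whose operator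
  is bounded below by |d| - |q| |c| > 0 on the ball; hence they agree, and every regular Moebius
  transformation is slice regular.

  Conversely, let a classical F_A be slice regular, F_A(q) = sum_n q^n s_n.  Comparing powers of the
  real variable x in (x q c + d) F_A(x q) = x q a + b gives d q s_1 + q c s_0 = q a and
  d q^2 s_2 + q c q s_1 = 0 for every q in the ball.  Subtracting the same identities at real q
  shows that first d and then c commute with all quaternions, i.e. are real.  For real c and d the
  Sp(1,1) relations force A = d [[u, -t], [-t u, 1]] with |t| < 1 and |u| = 1, and then F_A and the
  regular transformation of A both equal (1 - q t)^-1 (q - t) u.
*)

lemma cnj_simps [simp]:
  "Re (cnj x) = Re x" "Im1 (cnj x) = - Im1 x" "Im2 (cnj x) = - Im2 x" "Im3 (cnj x) = - Im3 x"
  by (simp_all add: cnj_def)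

lemma quat_of_real_simps [simp]:
  "Re (of_real r) = r" "Im1 (of_real r) = 0" "Im2 (of_real r) = 0" "Im3 (of_real r) = 0"
  by (simp_all add: of_real_def)

lemma norm_cnj [simp]: "norm (cnj x) = norm x"
  by (simp add: norm_quat_eq)

lemma cnj_of_real [simp]: "cnj (of_real r) = of_real r"
  by (simp add: quat_eq_iff)

lemma cnj_mult_self: "cnj x * x = of_real ((norm x)\<^sup>2)"
  by (simp add: quat_eq_iff norm_quat_eq power2_eq_square)

lemma of_real_mult_commute: "of_real r * x = x * (of_real r :: 'a::real_algebra_1)"
  by (simp add: of_real_def)

lemma norm_sylvester_ge: "(norm d - norm q * norm c) * norm x \<le> norm (x * d + q * x * c)"
  for x d q c :: "'a::real_normed_div_algebra"
  using norm_diff_ineq[of "x * d" "q * x * c"] by (simp add: norm_mult algebra_simps)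

lemma add_nonzero_if_norm_less:
  fixes x y :: "'a::real_normed_vector"
  assumes "norm y < norm x"
  shows "x + y \<noteq> 0"
proof
  assume "x + y = 0"
  with norm_diff_ineq[of x y] assms show False
    by simp
qed

lemma quat_in_Reals_if_commutes:
  assumes "\<And>q. q \<in> qball \<Longrightarrow> q \<noteq> 0 \<Longrightarrow> x * q = q * x"
  shows "x \<in> \<real>"
proof -
  have "Quat 0 (1/2) 0 0 \<in> qball" "Quat 0 0 (1/2) 0 \<in> qball"
    by (simp_all add: norm_quat_eq power2_eq_square real_sqrt_lt_1_iff)
  moreover have "Quat 0 (1/2) 0 0 \<noteq> 0" "Quat 0 0 (1/2) 0 \<noteq> 0"
    by (simp_all add: quat_eq_iff)
  ultimately have "x * Quat 0 (1/2) 0 0 = Quat 0 (1/2) 0 0 * x" "x * Quat 0 0 (1/2) 0 = Quat 0 0 (1/2) 0 * x"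
    using assms by blast+
  then have "x = of_real (Re x)"
    by (simp add: quat_eq_iff)
  then show ?thesis
    by (metis Reals_of_real)
qed

section \<open>Uniqueness of power series coefficients\<close>

lemma real_powser_unique:
  fixes c :: "nat \<Rightarrow> real"
  assumes r: "0 < r" and sums0: "\<And>x. \<bar>x\<bar> < r \<Longrightarrow> (\<lambda>n. c n * x ^ n) sums 0"
  shows "c n = 0"
proof (rule ccontr)
  assume cn: "c n \<noteq> 0"
  have "c 0 = 0"
    using sums0[of 0] r by simp
  with cn have "n > 0"
    by (cases n) auto
  have sums0': "\<And>x. norm (x - 0) < r \<Longrightarrow> (\<lambda>n. c n * (x - 0) ^ n) sums (\<lambda>_. 0::real) x"
    using sums0 by simp
  obtain s where "0 < s" and "\<And>z::real. z \<in> cball 0 s - {0} \<Longrightarrow> 0 \<noteq> 0"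
    using powser_0_nonzero[where f = "\<lambda>_. 0", OF r sums0' _ cn \<open>n > 0\<close>] by auto
  moreover have "s \<in> cball 0 s - {0}"
    using \<open>0 < s\<close> by simp
  ultimately show False
    by blast
qed

lemma scaleR_powser_unique:
  fixes a b :: "nat \<Rightarrow> 'a::real_inner"
  assumes "0 < r"
    and "\<And>x. \<bar>x\<bar> < r \<Longrightarrow> (\<lambda>n. x ^ n *\<^sub>R a n) sums f x"
    and "\<And>x. \<bar>x\<bar> < r \<Longrightarrow> (\<lambda>n. x ^ n *\<^sub>R b n) sums f x"
  shows "a = b"
proof
  fix n
  have "inner (a n - b n) (a n - b n) = 0"
  proof (rule real_powser_unique[where c = "\<lambda>m. inner (a m - b m) (a n - b n)", OF \<open>0 < r\<close>])
    fix x :: real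
    assume "\<bar>x\<bar> < r"
    then have "(\<lambda>n. x ^ n *\<^sub>R (a n - b n)) sums 0"
      using sums_diff assms(2,3) by (fastforce simp: scaleR_diff_right)
    from bounded_linear.sums[OF bounded_linear_inner_left this]
    show "(\<lambda>m. inner (a m - b m) (a n - b n) * x ^ m) sums 0"
      by (simp add: mult.commute)
  qed
  then show "a n = b n"
    by simp
qed

lemma scoeff_eq:
  assumes "\<forall>q\<in>qball. (\<lambda>n. q ^ n * a n) sums f q"
  shows "scoeff f = a"
proof -
  have on_reals: "(\<lambda>n. x ^ n *\<^sub>R c n) sums f (of_real x)"
    if "\<forall>q\<in>qball. (\<lambda>n. q ^ n * c n) sums f q" and "\<bar>x\<bar> < 1" for c x
  proof -
    have "(\<lambda>n. of_real x ^ n * c n) sums f (of_real x)"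
      using that by simp
    then show ?thesis
      by (simp add: scaleR_conv_of_real of_real_power)
  qed
  have "\<forall>q\<in>qball. (\<lambda>n. q ^ n * scoeff f n) sums f q"
    unfolding scoeff_def by (rule someI[of _ a]) (rule assms)
  then show ?thesis
    using on_reals assms by (intro scaleR_powser_unique[of 1 _ "\<lambda>x. f (of_real x)"]) auto
qed

section \<open>Star products with a linear function\<close>

definition lin_coeff :: "quat \<Rightarrow> quat \<Rightarrow> nat \<Rightarrow> quat" where
  "lin_coeff a b n = (if n = 0 then b else if n = 1 then a else 0)"

lemma lin_sums: "(\<lambda>n. q ^ n * lin_coeff a b n) sums lin a b q"
proof -
  have "(\<lambda>n. q ^ n * lin_coeff a b n) sums (\<Sum>n\<in>{0,1}. q ^ n * lin_coeff a b n)"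
    by (rule sums_finite) (auto simp: lin_coeff_def)
  then show ?thesis
    by (simp add: lin_coeff_def lin_def add.commute)
qed

lemma scoeff_lin: "scoeff (lin a b) = lin_coeff a b"
  by (rule scoeff_eq) (simp add: lin_sums)

lemma rconj_lin: "rconj (lin a b) = lin (cnj a) (cnj b)"
proof
  fix q
  have cnj_coeff: "cnj (lin_coeff a b n) = lin_coeff (cnj a) (cnj b) n" for n
    by (simp add: lin_coeff_def quat_eq_iff)
  show "rconj (lin a b) q = lin (cnj a) (cnj b) q"
    unfolding rconj_def scoeff_lin cnj_coeff by (rule sums_unique[OF lin_sums, symmetric])
qed

lemma sum_mult_lin_coeff:
  "(\<Sum>k\<le>n. e k * lin_coeff a b (n - k)) = e n * b + (if n = 0 then 0 else e (n - 1) * a)"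
proof -
  have "(\<Sum>k\<le>n. e k * lin_coeff a b (n - k))
      = (\<Sum>k\<le>n. (if k = n then e n * b else 0) + (if n \<noteq> 0 \<and> k = n - 1 then e (n - 1) * a else 0))"
    by (rule sum.cong) (auto simp: lin_coeff_def)
  then show ?thesis
    by (simp add: sum.distrib)
qed

lemma star_lin_sums:
  assumes f: "\<forall>q\<in>qball. (\<lambda>n. q ^ n * e n) sums f q" and q: "q \<in> qball"
  shows "(\<lambda>n. q ^ n * (e n * b + (if n = 0 then 0 else e (n - 1) * a))) sums (f q * b + q * f q * a)"
proof -
  have fq: "(\<lambda>n. q ^ n * e n) sums f q"
    using f q by blast
  have "(\<lambda>n. q ^ n * (if n = 0 then 0 else e (n - 1) * a)) sums (q * f q * a)"
    by (rule sums_Suc_imp) (use sums_mult2[OF sums_mult[OF fq, of q], of a] in \<open>simp_all add: mult.assoc\<close>)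
  with sums_mult2[OF fq, of b] show ?thesis
    by (simp add: distrib_left mult.assoc sums_add)
qed

lemma star_lin_eq:
  assumes f: "\<forall>q\<in>qball. (\<lambda>n. q ^ n * e n) sums f q" and q: "q \<in> qball"
  shows "(f \<star> lin a b) q = f q * b + q * f q * a"
  using sums_unique[OF star_lin_sums[OF assms]]
  by (simp add: star_def scoeff_eq[OF f] scoeff_lin sum_mult_lin_coeff)

lemma slice_regular_star_lin:
  assumes "slice_regular f"
  shows "slice_regular (f \<star> lin a b)"
proof -
  obtain e where f: "\<forall>q\<in>qball. (\<lambda>n. q ^ n * e n) sums f q"
    using assms by (auto simp: slice_regular_def)
  show ?thesis
    unfolding slice_regular_def
  proof (intro exI ballI)
    fix q :: quat
    assume q: "q \<in> qball"
    show "(\<lambda>n. q ^ n * (e n * b + (if n = 0 then 0 else e (n - 1) * a))) sums (f \<star> lin a b) q"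
      unfolding star_lin_eq[OF f q] by (rule star_lin_sums[OF f q])
  qed
qed

section \<open>Regular Moebius transformations are slice regular\<close>

lemma rsym_lin:
  assumes "q \<in> qball"
  shows "rsym (lin c d) q = (cnj d + q * cnj c) * d + q * (cnj d + q * cnj c) * c"
proof -
  have lin_series: "\<forall>q\<in>qball. (\<lambda>n. q ^ n * lin_coeff c d n) sums lin c d q"
    by (simp add: lin_sums)
  show ?thesis
    unfolding rsym_def rconj_lin star_lin_eq[OF lin_series assms] by (simp add: lin_def quat_eq_iff algebra_simps)
qed

lemma rsym_lin_commute:
  assumes "q \<in> qball"
  shows "q * rsym (lin c d) q = rsym (lin c d) q * q"
  unfolding rsym_lin[OF assms] by (simp add: quat_eq_iff algebra_simps)

lemma rinv_lin_sylvester: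
  assumes q: "q \<in> qball" and cd: "norm q * norm c < norm d"
  shows "rinv (lin c d) q * d + q * rinv (lin c d) q * c = 1"
proof -
  define Y where "Y = cnj d + q * cnj c"
  define P where "P = rsym (lin c d) q"
  have P: "P = Y * d + q * Y * c"
    unfolding P_def Y_def by (rule rsym_lin[OF q])
  have "norm (q * cnj c) < norm (cnj d)"
    using cd by (simp add: norm_mult)
  then have "Y \<noteq> 0"
    unfolding Y_def by (rule add_nonzero_if_norm_less)
  then have "0 < (norm d - norm q * norm c) * norm Y"
    using cd by simp
  with norm_sylvester_ge[of d q c Y] have "P \<noteq> 0"
    unfolding P by auto
  have rinv: "rinv (lin c d) q = inverse P * Y"
    unfolding rinv_def rconj_lin P_def Y_def by (simp add: lin_def add.commute)
  have commute: "q * inverse P = inverse P * q"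
    unfolding P_def by (rule mult_commute_imp_mult_inverse_commute[OF rsym_lin_commute[OF q, symmetric], symmetric])
  have "rinv (lin c d) q * d + q * rinv (lin c d) q * c = inverse P * Y * d + q * inverse P * Y * c"
    by (simp add: rinv mult.assoc)
  also have "\<dots> = inverse P * (Y * d + q * Y * c)"
    unfolding commute by (simp add: distrib_left mult.assoc)
  also have "\<dots> = 1"
    using P \<open>P \<noteq> 0\<close> by simp
  finally show ?thesis .
qed

lemma sylvester_partial_sums:
  fixes c d q w :: "'a::division_ring"
  assumes "d \<noteq> 0" and c: "c = w * d"
  shows "(\<Sum>n<N. q ^ n * (inverse d * (- w) ^ n)) * d + q * (\<Sum>n<N. q ^ n * (inverse d * (- w) ^ n)) * c
    = 1 - q ^ N * inverse d * (- w) ^ N * d"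
proof (induction N)
  case 0
  show ?case
    using \<open>d \<noteq> 0\<close> by simp
next
  case (Suc N)
  have "w * ((- w) ^ N * z) = (- w) ^ N * (w * z)" for z
    using power_commuting_commutes[of "- w" w N] by (simp add: mult.assoc[symmetric])
  then show ?case
    using Suc.IH by (simp add: c algebra_simps)
qed

lemma rinv_lin_sums:
  assumes cd: "norm c < norm d" and q: "q \<in> qball"
  shows "(\<lambda>n. q ^ n * (inverse d * (- (c * inverse d)) ^ n)) sums rinv (lin c d) q"
proof -
  define w where "w = c * inverse d"
  define R where "R = rinv (lin c d) q"
  define S where "S N = (\<Sum>n<N. q ^ n * (inverse d * (- w) ^ n))" for N
  define gap where "gap = norm d - norm q * norm c"
  have "d \<noteq> 0"
    using cd by auto
  then have "c = w * d"
    by (simp add: w_def mult.assoc)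
  have "norm q * norm c \<le> norm c"
    using q by (simp add: mult_left_le_one_le)
  then have gap: "0 < gap"
    using cd by (simp add: gap_def)
  have "norm w = norm c / norm d"
    by (simp add: w_def norm_mult norm_inverse divide_inverse)
  then have "norm w < 1"
    using cd by (auto simp: divide_less_eq_1)
  have R: "R * d + q * R * c = 1"
    unfolding R_def using rinv_lin_sylvester[OF q] \<open>norm q * norm c \<le> norm c\<close> cd by simp
  have "gap * norm (S N - R) \<le> norm w ^ N" for N
  proof -
    have "gap * norm (S N - R) \<le> norm ((S N - R) * d + q * (S N - R) * c)"
      unfolding gap_def by (rule norm_sylvester_ge)
    also have "(S N - R) * d + q * (S N - R) * c = (S N * d + q * S N * c) - (R * d + q * R * c)"
      by (simp add: algebra_simps)
    also have "\<dots> = - (q ^ N * inverse d * (- w) ^ N * d)"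
      unfolding S_def sylvester_partial_sums[OF \<open>d \<noteq> 0\<close> \<open>c = w * d\<close>] R by simp
    also have "norm \<dots> = norm q ^ N * norm w ^ N"
      using \<open>d \<noteq> 0\<close> by (simp add: norm_mult norm_power norm_inverse)
    also have "\<dots> \<le> norm w ^ N"
      using q by (simp add: mult_left_le_one_le power_le_one)
    finally show ?thesis .
  qed
  then have "\<forall>N. norm (S N - R) \<le> norm w ^ N / gap"
    using gap by (simp add: field_simps)
  moreover have "(\<lambda>N. norm w ^ N / gap) \<longlonglongrightarrow> 0"
    using \<open>norm w < 1\<close> by (intro tendsto_divide_zero LIMSEQ_power_zero) simp_all
  ultimately have "(\<lambda>N. S N - R) \<longlonglongrightarrow> 0"
    by (rule Lim_null_comparison[OF always_eventually])
  then show ?thesis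
    by (simp add: sums_def LIM_zero_iff S_def R_def w_def)
qed

lemma sp11_norm_less:
  assumes "sp11 a b c d"
  shows "norm c < norm d"
proof -
  from assms have "Re (cnj c * c + cnj d * (- d)) = - 1"
    by (simp add: sp11_def)
  then have "(norm d)\<^sup>2 = (norm c)\<^sup>2 + 1"
    by (simp add: norm_quat_eq power2_eq_square)
  then have "(norm c)\<^sup>2 < (norm d)\<^sup>2"
    by simp
  then show ?thesis
    by (rule power_less_imp_less_base) simp
qed

lemma slice_regular_reg_mobius:
  assumes "norm c < norm d"
  shows "slice_regular (reg_mobius a b c d)"
proof -
  have "slice_regular (rinv (lin c d))"
    unfolding slice_regular_def by (intro exI ballI) (rule rinv_lin_sums[OF assms])
  then show ?thesis
    unfolding reg_mobius_def by (rule slice_regular_star_lin)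
qed

lemma reg_mobius_eq:
  assumes "norm c < norm d" and "q \<in> qball"
  shows "reg_mobius a b c d q = rinv (lin c d) q * b + q * rinv (lin c d) q * a"
  unfolding reg_mobius_def by (rule star_lin_eq[OF ballI[OF rinv_lin_sums[OF assms(1)]] assms(2)])

section \<open>Classical Moebius transformations that are slice regular\<close>

lemma mobius_ray_sums:
  assumes cd: "norm c < norm d" and F: "\<forall>q\<in>qball. (\<lambda>n. q ^ n * s n) sums mobius a b c d q"
    and q: "q \<in> qball" and x: "\<bar>x\<bar> < 1"
  shows "(\<lambda>n. x ^ n *\<^sub>R (d * q ^ n * s n + (if n = 0 then 0 else q * c * q ^ (n - 1) * s (n - 1))))
    sums lin a b (x *\<^sub>R q)"
proof -
  define y where "y = x *\<^sub>R q"
  have yn: "y ^ n = x ^ n *\<^sub>R q ^ n" for n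
    by (induction n) (simp_all add: y_def)
  have "norm y \<le> norm q"
    using x by (simp add: y_def mult_left_le_one_le)
  then have "y \<in> qball"
    using q by simp
  with F have "(\<lambda>n. y ^ n * s n) sums mobius a b c d y"
    by blast
  then have Fy: "(\<lambda>n. x ^ n *\<^sub>R (q ^ n * s n)) sums mobius a b c d y"
    by (simp add: yn)
  have "norm (y * c) \<le> norm c"
    using \<open>y \<in> qball\<close> by (simp add: norm_mult mult_left_le_one_le)
  then have "d + y * c \<noteq> 0"
    using cd by (intro add_nonzero_if_norm_less) linarith
  then have lin: "d * mobius a b c d y + y * c * mobius a b c d y = lin a b y"
    unfolding mobius_def lin_def distrib_right[symmetric] add.commute[of d] mult.assoc[symmetric]
    by (simp add: add.commute)
  have S1: "(\<lambda>n. x ^ n *\<^sub>R (d * q ^ n * s n)) sums (d * mobius a b c d y)"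
    using sums_mult[OF Fy, of d] by (simp add: mult.assoc)
  have shifted: "(\<lambda>n. x ^ Suc n *\<^sub>R (q * c * q ^ n * s n)) sums (y * c * mobius a b c d y)"
    using sums_mult[OF Fy, of "y * c"] by (simp add: y_def mult.assoc power_commutes)
  have S2: "(\<lambda>n. x ^ n *\<^sub>R (if n = 0 then 0 else q * c * q ^ (n - 1) * s (n - 1)))
      sums (y * c * mobius a b c d y)"
    by (rule sums_Suc_imp) (use shifted in simp_all)
  show ?thesis
    using sums_add[OF S1 S2] unfolding y_def[symmetric] scaleR_add_right lin .
qed

lemma mobius_series_coeffs:
  assumes cd: "norm c < norm d" and F: "\<forall>q\<in>qball. (\<lambda>n. q ^ n * s n) sums mobius a b c d q"
    and q: "q \<in> qball"
  shows "d * q ^ n * s n + (if n = 0 then 0 else q * c * q ^ (n - 1) * s (n - 1)) = q ^ n * lin_coeff a b n"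
proof -
  have "(\<lambda>n. d * q ^ n * s n + (if n = 0 then 0 else q * c * q ^ (n - 1) * s (n - 1)))
      = (\<lambda>n. q ^ n * lin_coeff a b n)"
  proof (rule scaleR_powser_unique[of 1 _ "\<lambda>x. lin a b (x *\<^sub>R q)"])
    fix x :: real
    assume "\<bar>x\<bar> < 1"
    then show "(\<lambda>n. x ^ n *\<^sub>R (d * q ^ n * s n + (if n = 0 then 0 else q * c * q ^ (n - 1) * s (n - 1))))
        sums lin a b (x *\<^sub>R q)"
      by (rule mobius_ray_sums[OF cd F q])
    have "(x *\<^sub>R q) ^ n = x ^ n *\<^sub>R q ^ n" for n
      by (induction n) simp_all
    then show "(\<lambda>n. x ^ n *\<^sub>R (q ^ n * lin_coeff a b n)) sums lin a b (x *\<^sub>R q)"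
      using lin_sums[of "x *\<^sub>R q" a b] by simp
  qed simp
  then show ?thesis
    by (rule fun_cong)
qed

lemma mobius_series_real_coeffs:
  assumes "norm c < norm d" and "\<forall>q\<in>qball. (\<lambda>n. q ^ n * s n) sums mobius a b c d q"
  shows "d * s n + (if n = 0 then 0 else c * s (n - 1)) = lin_coeff a b n"
proof -
  define h :: quat where "h = (1/2) *\<^sub>R 1"
  have "h \<in> qball"
    by (simp add: h_def)
  have "h ^ n = (1/2) ^ n *\<^sub>R 1" for n
    by (induction n) (simp_all add: h_def)
  then have "(1/2) ^ n *\<^sub>R (d * s n + (if n = 0 then 0 else c * s (n - 1)))
      = (1/2) ^ n *\<^sub>R lin_coeff a b n"
    using mobius_series_coeffs[OF assms \<open>h \<in> qball\<close>, of n]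
    by (cases n) (simp_all add: h_def scaleR_add_right)
  then show ?thesis
    by simp
qed

lemma slice_regular_mobius_imp_Reals:
  assumes sp: "sp11 a b c d" and "slice_regular (mobius a b c d)"
  shows "c \<in> \<real>" "d \<in> \<real>"
proof -
  obtain s where F: "\<forall>q\<in>qball. (\<lambda>n. q ^ n * s n) sums mobius a b c d q"
    using assms(2) by (auto simp: slice_regular_def)
  note coeffs = mobius_series_coeffs[OF sp11_norm_less[OF sp] F]
  note real_coeffs = mobius_series_real_coeffs[OF sp11_norm_less[OF sp] F]
  from real_coeffs[of 0] real_coeffs[of 1] real_coeffs[of 2]
  have s0: "d * s 0 = b" and s1: "d * s 1 = a - c * s 0" and s2: "d * s 2 = - (c * s 1)"
    by (simp_all add: lin_coeff_def eq_diff_eq eq_neg_iff_add_eq_0)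
  have "cnj a * (a - c * s 0) = 1"
    using sp s0 by (simp add: sp11_def right_diff_distrib mult.assoc[symmetric] algebra_simps)
  then have "s 1 \<noteq> 0"
    using s1 by auto
  show "d \<in> \<real>"
  proof (rule quat_in_Reals_if_commutes)
    fix q :: quat
    assume "q \<in> qball"
    have "d * q * s 1 = q * a - q * c * s 0"
      using coeffs[OF \<open>q \<in> qball\<close>, of 1] by (simp add: lin_coeff_def eq_diff_eq)
    also have "\<dots> = q * d * s 1"
      by (simp only: s1 right_diff_distrib mult.assoc)
    finally show "d * q = q * d"
      using \<open>s 1 \<noteq> 0\<close> by simp
  qed
  then obtain dr where "d = of_real dr"
    by (auto elim: Reals_cases)
  then have d_commute: "d * x = x * d" for x
    by (simp add: of_real_mult_commute)
  show "c \<in> \<real>"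
  proof (rule quat_in_Reals_if_commutes)
    fix q :: quat
    assume "q \<in> qball" "q \<noteq> 0"
    have "q * c * q * s 1 = - (d * q\<^sup>2 * s 2)"
      using coeffs[OF \<open>q \<in> qball\<close>, of 2] by (simp add: lin_coeff_def eq_neg_iff_add_eq_0 add.commute)
    also have "\<dots> = - (q\<^sup>2 * (d * s 2))"
      by (simp add: d_commute mult.assoc)
    also have "\<dots> = q * q * c * s 1"
      by (simp add: s2 power2_eq_square mult.assoc)
    finally have "q * (c * q) * s 1 = q * (q * c) * s 1"
      by (simp only: mult.assoc)
    then show "c * q = q * c"
      using \<open>s 1 \<noteq> 0\<close> \<open>q \<noteq> 0\<close> by simp
  qed
qed

section \<open>Real denominator coefficients\<close>

lemma rinv_lin_of_real:
  assumes "q \<in> qball"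
  shows "rinv (lin (of_real cr) (of_real dr)) q = inverse (q * of_real cr + of_real dr)"
proof -
  define Y where "Y = q * of_real cr + of_real dr"
  have "rsym (lin (of_real cr) (of_real dr)) q = Y * Y"
    by (simp add: rsym_lin[OF assms] Y_def quat_eq_iff algebra_simps)
  moreover have "rconj (lin (of_real cr) (of_real dr)) q = Y"
    unfolding rconj_lin by (simp add: lin_def Y_def quat_eq_iff)
  ultimately show ?thesis
    by (cases "Y = 0") (simp_all add: rinv_def Y_def nonzero_inverse_mult_distrib mult.assoc)
qed

lemma reg_mobius_eq_mobius_of_real:
  assumes "\<bar>cr\<bar> < \<bar>dr\<bar>" and q: "q \<in> qball"
  shows "reg_mobius a b (of_real cr) (of_real dr) q = mobius a b (of_real cr) (of_real dr) q"
proof -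
  define Y where "Y = q * of_real cr + of_real dr"
  have "q * Y = Y * q"
    by (simp add: Y_def quat_eq_iff algebra_simps)
  then have "q * inverse Y = inverse Y * q"
    by (rule mult_commute_imp_mult_inverse_commute[symmetric, OF sym])
  then have "inverse Y * b + q * inverse Y * a = inverse Y * (q * a + b)"
    by (simp add: distrib_left mult.assoc)
  with assms show ?thesis
    by (simp add: reg_mobius_eq rinv_lin_of_real mobius_def Y_def)
qed

lemma sp11_of_realE:
  assumes sp: "sp11 a b (of_real cr) (of_real dr)"
  obtains t u where "\<bar>t\<bar> < 1" "norm u = 1" "dr \<noteq> 0"
    "a = dr *\<^sub>R u" "b = (- t * dr) *\<^sub>R u" "cr = - t * dr"
proof -
  have "\<bar>cr\<bar> < \<bar>dr\<bar>"
    using sp11_norm_less[OF sp] by simp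
  then have "dr \<noteq> 0"
    by auto
  define t where "t = - cr / dr"
  define u where "u = (1 / dr) *\<^sub>R a"
  from sp have "of_real cr * a - of_real dr * b = 0" and "Re (cnj a * a - cnj b * b) = 1"
    unfolding sp11_def by (simp_all add: algebra_simps)
  then have b: "b = (- t * dr) *\<^sub>R u" and norms: "(norm a)\<^sup>2 = (norm b)\<^sup>2 + 1"
    using \<open>dr \<noteq> 0\<close> by (simp_all add: t_def u_def quat_eq_iff field_simps norm_quat_eq power2_eq_square)
  have "(norm a)\<^sup>2 * (dr\<^sup>2 - cr\<^sup>2) = dr\<^sup>2"
    using norms \<open>dr \<noteq> 0\<close> by (simp add: b u_def t_def power_mult_distrib power_divide field_simps)
  moreover have "dr\<^sup>2 - cr\<^sup>2 = 1"
    using sp by (simp add: sp11_def quat_eq_iff power2_eq_square)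
  ultimately have "(norm a)\<^sup>2 = \<bar>dr\<bar>\<^sup>2"
    by simp
  then have "norm u = 1"
    using \<open>dr \<noteq> 0\<close> power2_eq_iff_nonneg[of "norm a" "\<bar>dr\<bar>"] by (simp add: u_def)
  moreover have "\<bar>t\<bar> < 1"
    using \<open>\<bar>cr\<bar> < \<bar>dr\<bar>\<close> by (simp add: t_def abs_divide)
  moreover have "a = dr *\<^sub>R u" "cr = - t * dr"
    using \<open>dr \<noteq> 0\<close> by (simp_all add: u_def t_def)
  ultimately show ?thesis
    using that b \<open>dr \<noteq> 0\<close> by blast
qed

lemma sp11_of_realI:
  assumes "dr\<^sup>2 * (1 - t\<^sup>2) = 1" and "norm u = 1"
  shows "sp11 (dr *\<^sub>R u) ((- t * dr) *\<^sub>R u) (of_real (- t * dr)) (of_real dr)"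
proof -
  have "cnj (dr *\<^sub>R u) * (dr *\<^sub>R u) + cnj ((- t * dr) *\<^sub>R u) * (- ((- t * dr) *\<^sub>R u))
      = of_real (dr\<^sup>2 * (1 - t\<^sup>2)) * (cnj u * u)"
    by (simp add: quat_eq_iff power2_eq_square algebra_simps)
  also have "\<dots> = 1"
    using assms by (simp add: cnj_mult_self)
  finally show ?thesis
    using assms(1) by (simp add: sp11_def quat_eq_iff power2_eq_square algebra_simps)
qed

definition mobius_std :: "real \<Rightarrow> quat \<Rightarrow> quat \<Rightarrow> quat" where
  "mobius_std t u = (\<lambda>q. inverse (1 - q * of_real t) * (q - of_real t) * u)"

lemma mobius_of_real_eq:
  assumes "dr \<noteq> 0"
  shows "mobius (dr *\<^sub>R u) ((- t * dr) *\<^sub>R u) (of_real (- t * dr)) (of_real dr) = mobius_std t u"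
proof
  fix q :: quat
  have den: "q * of_real (- t * dr) + of_real dr = of_real dr * (1 - q * of_real t)"
    and num: "q * (dr *\<^sub>R u) + (- t * dr) *\<^sub>R u = of_real dr * ((q - of_real t) * u)"
    by (simp_all add: quat_eq_iff algebra_simps)
  have "inverse (of_real dr * (1 - q * of_real t)) * of_real dr = inverse (1 - q * of_real t)"
    using assms by (cases "1 - q * of_real t = 0") (simp_all add: nonzero_inverse_mult_distrib mult.assoc)
  then show "mobius (dr *\<^sub>R u) ((- t * dr) *\<^sub>R u) (of_real (- t * dr)) (of_real dr) q = mobius_std t u q"
    unfolding mobius_def mobius_std_def den num by (simp add: mult.assoc[symmetric])
qed

lemma slice_regular_restrict_cong:
  assumes "slice_regular f" and "restrict f qball = restrict g qball"
  shows "slice_regular g"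
proof -
  have "f q = g q" if "q \<in> qball" for q
    using fun_cong[OF assms(2), of q] that by simp
  with assms(1) show ?thesis
    by (auto simp: slice_regular_def)
qed

lemma mobius_eq_reg_mobius_imp_mobius_std:
  assumes sp: "sp11 a b c d" and "sp11 a' b' c' d'"
    and "restrict (mobius a b c d) qball = restrict (reg_mobius a' b' c' d') qball"
  obtains t u where "\<bar>t\<bar> < 1" "norm u = 1" "mobius a b c d = mobius_std t u"
proof -
  have "slice_regular (mobius a b c d)"
    using assms slice_regular_restrict_cong slice_regular_reg_mobius sp11_norm_less by metis
  then obtain cr dr where c: "c = of_real cr" and d: "d = of_real dr"
    using slice_regular_mobius_imp_Reals[OF sp] by (auto elim!: Reals_cases)
  from sp obtain t u where tu: "\<bar>t\<bar> < 1" "norm u = 1" "dr \<noteq> 0"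
    and abc: "a = dr *\<^sub>R u" "b = (- t * dr) *\<^sub>R u" "cr = - t * dr"
    unfolding c d by (rule sp11_of_realE)
  have "mobius a b c d = mobius_std t u"
    unfolding c d abc by (rule mobius_of_real_eq) fact
  with tu that show ?thesis
    by blast
qed

lemma mobius_std_eq_mobius_and_reg_mobius:
  assumes "\<bar>t\<bar> < 1" and "norm u = 1"
  obtains a b c d where "sp11 a b c d" "mobius a b c d = mobius_std t u"
    "restrict (reg_mobius a b c d) qball = restrict (mobius_std t u) qball"
proof -
  define dr where "dr = 1 / sqrt (1 - t\<^sup>2)"
  have "t\<^sup>2 < 1"
    using assms(1) by (simp add: abs_square_less_1)
  then have "dr\<^sup>2 * (1 - t\<^sup>2) = 1" and "0 < dr"
    by (simp_all add: dr_def power_divide)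
  then have "\<bar>- t * dr\<bar> < \<bar>dr\<bar>" and "dr \<noteq> 0"
    using assms(1) by (simp_all add: abs_mult)
  show ?thesis
  proof (rule that)
    show "sp11 (dr *\<^sub>R u) ((- t * dr) *\<^sub>R u) (of_real (- t * dr)) (of_real dr)"
      by (rule sp11_of_realI) fact+
    show mob: "mobius (dr *\<^sub>R u) ((- t * dr) *\<^sub>R u) (of_real (- t * dr)) (of_real dr) = mobius_std t u"
      by (rule mobius_of_real_eq) fact
    show "restrict (reg_mobius (dr *\<^sub>R u) ((- t * dr) *\<^sub>R u) (of_real (- t * dr)) (of_real dr)) qball
        = restrict (mobius_std t u) qball"
      unfolding mob[symmetric]
      by (rule restrict_ext) (rule reg_mobius_eq_mobius_of_real[OF \<open>\<bar>- t * dr\<bar> < \<bar>dr\<bar>\<close>])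
  qed
qed

theorem proposition3p1:
  shows "{restrict (mobius a b c d) qball | a b c d. sp11 a b c d}
       \<inter> {restrict (reg_mobius a b c d) qball | a b c d. sp11 a b c d}
       = {restrict (\<lambda>q. inverse (1 - q * of_real t) * (q - of_real t) * u) qball
            | t u. - 1 < t \<and> t < 1 \<and> norm u = 1}"
proof (intro equalityI subsetI)
  fix X
  assume "X \<in> {restrict (mobius a b c d) qball | a b c d. sp11 a b c d}
       \<inter> {restrict (reg_mobius a b c d) qball | a b c d. sp11 a b c d}"
  then obtain a b c d a' b' c' d' where "sp11 a b c d" "sp11 a' b' c' d'"
    and X: "X = restrict (mobius a b c d) qball" "X = restrict (reg_mobius a' b' c' d') qball"
    by blast
  then obtain t u where "\<bar>t\<bar> < 1" "norm u = 1" "mobius a b c d = mobius_std t u"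
    by (metis mobius_eq_reg_mobius_imp_mobius_std)
  with X(1) show "X \<in> {restrict (\<lambda>q. inverse (1 - q * of_real t) * (q - of_real t) * u) qball
      | t u. - 1 < t \<and> t < 1 \<and> norm u = 1}"
    by (auto simp: mobius_std_def intro!: exI[of _ t] exI[of _ u])
next
  fix X
  assume "X \<in> {restrict (\<lambda>q. inverse (1 - q * of_real t) * (q - of_real t) * u) qball
      | t u. - 1 < t \<and> t < 1 \<and> norm u = 1}"
  then obtain t u where X: "X = restrict (mobius_std t u) qball" and tu: "\<bar>t\<bar> < 1" "norm u = 1"
    by (auto simp: mobius_std_def)
  from tu obtain a b c d where "sp11 a b c d" "mobius a b c d = mobius_std t u"
    "restrict (reg_mobius a b c d) qball = restrict (mobius_std t u) qball"
    by (rule mobius_std_eq_mobius_and_reg_mobius)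
  with X show "X \<in> {restrict (mobius a b c d) qball | a b c d. sp11 a b c d}
      \<inter> {restrict (reg_mobius a b c d) qball | a b c d. sp11 a b c d}"
    by (metis (mono_tags, lifting) IntI mem_Collect_eq)
qed

end
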